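(* Let $A$ be a left skew brace and $I$ an ideal of $A$. Then there is a largest ideal of $A$ that centralizes $I$ (the centralizer of $I$); i.e. the set of ideals $J$ of $A$ with $[I,J]=0$ has a greatest element with respect to inclusion.
   Context: A (left) skew brace is a triple $(A,*,\circ)$ with $(A,* )$ and $(A,\circ)$ groups with common identity $1$ such that $a\circ(b*c)=(a\circ b)*a^{-*}*(a\circ c)$ for all $a,b,c\in A$ ($a^{-*}$ the $*$-inverse). Morphisms are maps that are homomorphisms for both operations; products are componentwise. For $a,u\in A$, $\lambda_a(u)=a^{-*}*(a\circ u)$. An ideal of $A$ is a subset $I$ that is a normal subgroup of $(A,\circ)$, satisfies $I*a=a*I$ for all $a\in A$, and $\lambda_a(I)\subseteq I$ for all $a\in A$. An ideal $J$ centralizes $I$, written $[I,J]=0$, if there is a skew brace morphism $\varphi\colon I\times J\to A$ with $\varphi(i,1)=i$ and $\varphi(1,j)=j$ for all $i\in I$, $j\in J$. *)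

theory Defs
  imports "HOL-Algebra.Group" "HOL-Algebra.Coset"
begin

text \<open>A skew brace is given by a carrier set A, the operation add (written * in the paper),
the operation mul (written \<circ> in the paper) and the common identity e.\<close>

definition grp :: "'a set \<Rightarrow> ('a \<Rightarrow> 'a \<Rightarrow> 'a) \<Rightarrow> 'a \<Rightarrow> 'a monoid" where
  "grp A f e = \<lparr>carrier = A, mult = f, one = e\<rparr>"

definition add_inv :: "'a set \<Rightarrow> ('a \<Rightarrow> 'a \<Rightarrow> 'a) \<Rightarrow> 'a \<Rightarrow> 'a \<Rightarrow> 'a" where
  "add_inv A add e a = inv\<^bsub>grp A add e\<^esub> a"

definition skew_brace :: "'a set \<Rightarrow> ('a \<Rightarrow> 'a \<Rightarrow> 'a) \<Rightarrow> ('a \<Rightarrow> 'a \<Rightarrow> 'a) \<Rightarrow> 'a \<Rightarrow> bool" where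
  "skew_brace A add mul e \<longleftrightarrow>
     group (grp A add e) \<and> group (grp A mul e) \<and>
     (\<forall>a\<in>A. \<forall>b\<in>A. \<forall>c\<in>A.
        mul a (add b c) = add (add (mul a b) (add_inv A add e a)) (mul a c))"

definition lam :: "'a set \<Rightarrow> ('a \<Rightarrow> 'a \<Rightarrow> 'a) \<Rightarrow> ('a \<Rightarrow> 'a \<Rightarrow> 'a) \<Rightarrow> 'a \<Rightarrow> 'a \<Rightarrow> 'a \<Rightarrow> 'a" where
  "lam A add mul e a u = add (add_inv A add e a) (mul a u)"

definition sb_ideal :: "'a set \<Rightarrow> ('a \<Rightarrow> 'a \<Rightarrow> 'a) \<Rightarrow> ('a \<Rightarrow> 'a \<Rightarrow> 'a) \<Rightarrow> 'a \<Rightarrow> 'a set \<Rightarrow> bool" where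
  "sb_ideal A add mul e I \<longleftrightarrow>
     normal I (grp A mul e) \<and>
     (\<forall>a\<in>A. (\<lambda>i. add i a) ` I = (\<lambda>i. add a i) ` I) \<and>
     (\<forall>a\<in>A. lam A add mul e a ` I \<subseteq> I)"

text \<open>[I,J]=0: there is a skew brace morphism phi from I \<times> J (componentwise operations)
to A with phi(i,e)=i and phi(e,j)=j.\<close>

definition centralizes :: "'a set \<Rightarrow> ('a \<Rightarrow> 'a \<Rightarrow> 'a) \<Rightarrow> ('a \<Rightarrow> 'a \<Rightarrow> 'a) \<Rightarrow> 'a \<Rightarrow> 'a set \<Rightarrow> 'a set \<Rightarrow> bool" where
  "centralizes A add mul e I J \<longleftrightarrow>
     (\<exists>\<phi> :: 'a \<times> 'a \<Rightarrow> 'a.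
        (\<forall>x\<in>I \<times> J. \<phi> x \<in> A) \<and>
        (\<forall>i\<in>I. \<forall>j\<in>J. \<forall>i'\<in>I. \<forall>j'\<in>J.
            \<phi> (add i i', add j j') = add (\<phi> (i, j)) (\<phi> (i', j')) \<and>
            \<phi> (mul i i', mul j j') = mul (\<phi> (i, j)) (\<phi> (i', j'))) \<and>
        (\<forall>i\<in>I. \<phi> (i, e) = i) \<and> (\<forall>j\<in>J. \<phi> (e, j) = j))"

end

theory Submission
  imports Defs "HOL-Algebra.SndIsomorphismGrp"
begin

text \<open>Evaluating a morphism \<open>\<phi>\<close> on \<open>(i, j) = (i, 1)(1, j) = (1, j)(i, 1)\<close> in both
  groups of \<open>I \<times> J\<close> shows that \<open>[I, J] = 0\<close> holds exactly when every \<open>i \<in> I\<close> and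
  \<open>j \<in> J\<close> commute in both groups and satisfy \<open>i * j = i \<circ> j\<close>; then \<open>\<phi>(i, j) = i * j\<close>.
  This elementwise condition passes to unions, and it passes to the product \<open>J \<circ> K\<close> of two
  ideals: writing \<open>x \<circ> y = x * \<lambda>\<^sub>x(y)\<close>, both factors are fixed by \<open>\<lambda>\<^sub>i\<close>. So the ideals
  centralizing \<open>I\<close> form a directed family containing \<open>{1}\<close>, and its union, which is again an
  ideal, is the largest of them.\<close>

lemma grp_simps [simp]: "carrier (grp A f e) = A" "mult (grp A f e) = f" "one (grp A f e) = e"
  by (simp_all add: grp_def)

lemma mem_set_mult_grp: "z \<in> J <#>\<^bsub>grp A f e\<^esub> K \<longleftrightarrow> (\<exists>x\<in>J. \<exists>y\<in>K. z = f x y)"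
  by (auto simp: set_mult_def)

lemma (in group) normal_Union_directed:
  assumes "\<N> \<noteq> {}" and normal: "\<And>N. N \<in> \<N> \<Longrightarrow> N \<lhd> G"
    and directed: "\<And>N N'. N \<in> \<N> \<Longrightarrow> N' \<in> \<N> \<Longrightarrow> \<exists>N''\<in>\<N>. N \<union> N' \<subseteq> N''"
  shows "\<Union>\<N> \<lhd> G"
proof -
  note sub = normal_imp_subgroup[OF normal]
  have "subgroup (\<Union>\<N>) G"
  proof (rule subgroupI)
    show "\<Union>\<N> \<subseteq> carrier G"
      using subgroup.subset[OF sub] by blast
    show "\<Union>\<N> \<noteq> {}"
      using assms(1) subgroup.one_closed[OF sub] by blast
    show "inv a \<in> \<Union>\<N>" if "a \<in> \<Union>\<N>" for a
      using that subgroup.m_inv_closed[OF sub] by blast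
    show "a \<otimes> b \<in> \<Union>\<N>" if ab: "a \<in> \<Union>\<N>" "b \<in> \<Union>\<N>" for a b
    proof -
      obtain N N' where "N \<in> \<N>" "N' \<in> \<N>" "a \<in> N" "b \<in> N'" using ab by blast
      then obtain N'' where "N'' \<in> \<N>" "a \<in> N''" "b \<in> N''" using directed by blast
      then show ?thesis using subgroup.m_closed[OF sub] by blast
    qed
  qed
  moreover have "x \<otimes> h \<otimes> inv x \<in> \<Union>\<N>" if "x \<in> carrier G" "h \<in> \<Union>\<N>" for x h
    using that normal_invE(2)[OF normal] by blast
  ultimately show ?thesis by (simp add: normal_inv_iff)
qed

locale left_skew_brace =
  fixes A :: "'a set" and add mul :: "'a \<Rightarrow> 'a \<Rightarrow> 'a" and e :: 'a
  assumes skew_brace: "skew_brace A add mul e"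
begin

abbreviation Add where "Add \<equiv> grp A add e"
abbreviation Mul where "Mul \<equiv> grp A mul e"
abbreviation ainv where "ainv a \<equiv> add_inv A add e a"
abbreviation minv where "minv a \<equiv> inv\<^bsub>Mul\<^esub> a"
abbreviation lmap where "lmap a u \<equiv> lam A add mul e a u"
abbreviation ideal where "ideal J \<equiv> sb_ideal A add mul e J"

sublocale Add: group Add using skew_brace unfolding skew_brace_def by blast
sublocale Mul: group Mul using skew_brace unfolding skew_brace_def by blast

lemma add_closed [simp]: "a \<in> A \<Longrightarrow> b \<in> A \<Longrightarrow> add a b \<in> A"
  using Add.m_closed by simp

lemma mul_closed [simp]: "a \<in> A \<Longrightarrow> b \<in> A \<Longrightarrow> mul a b \<in> A"
  using Mul.m_closed by simp

lemma ainv_closed [simp]: "a \<in> A \<Longrightarrow> ainv a \<in> A"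
  using Add.inv_closed by (simp add: add_inv_def)

lemma minv_closed [simp]: "a \<in> A \<Longrightarrow> minv a \<in> A"
  using Mul.inv_closed by simp

lemma add_assoc: "a \<in> A \<Longrightarrow> b \<in> A \<Longrightarrow> c \<in> A \<Longrightarrow> add (add a b) c = add a (add b c)"
  using Add.m_assoc by simp

lemma mul_assoc: "a \<in> A \<Longrightarrow> b \<in> A \<Longrightarrow> c \<in> A \<Longrightarrow> mul (mul a b) c = mul a (mul b c)"
  using Mul.m_assoc by simp

lemma add_one [simp]: "a \<in> A \<Longrightarrow> add e a = a" "a \<in> A \<Longrightarrow> add a e = a"
  using Add.l_one Add.r_one by simp_all

lemma mul_one [simp]: "a \<in> A \<Longrightarrow> mul e a = a" "a \<in> A \<Longrightarrow> mul a e = a"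
  using Mul.l_one Mul.r_one by simp_all

lemma add_ainv [simp]: "a \<in> A \<Longrightarrow> add (ainv a) a = e" "a \<in> A \<Longrightarrow> add a (ainv a) = e"
  using Add.l_inv Add.r_inv by (simp_all add: add_inv_def)

lemma mul_minv [simp]: "a \<in> A \<Longrightarrow> mul (minv a) a = e" "a \<in> A \<Longrightarrow> mul a (minv a) = e"
  using Mul.l_inv Mul.r_inv by simp_all

lemma ainv_add_cancel [simp]:
  "a \<in> A \<Longrightarrow> b \<in> A \<Longrightarrow> add (ainv a) (add a b) = b"
  "a \<in> A \<Longrightarrow> b \<in> A \<Longrightarrow> add a (add (ainv a) b) = b"
  by (simp_all flip: add_assoc)

lemma brace_distrib:
  "a \<in> A \<Longrightarrow> b \<in> A \<Longrightarrow> c \<in> A \<Longrightarrow> mul a (add b c) = add (add (mul a b) (ainv a)) (mul a c)"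
  using skew_brace unfolding skew_brace_def by blast

lemma lmap_closed [simp]: "a \<in> A \<Longrightarrow> u \<in> A \<Longrightarrow> lmap a u \<in> A"
  by (simp add: lam_def)

lemma lmap_right_one [simp]: "a \<in> A \<Longrightarrow> lmap a e = e"
  by (simp add: lam_def)

lemma lmap_one [simp]: "u \<in> A \<Longrightarrow> lmap e u = u"
  using Add.inv_one by (simp add: lam_def add_inv_def)

lemma mul_eq_add_lmap: "a \<in> A \<Longrightarrow> u \<in> A \<Longrightarrow> mul a u = add a (lmap a u)"
  by (simp add: lam_def)

lemma lmap_add: "a \<in> A \<Longrightarrow> b \<in> A \<Longrightarrow> c \<in> A \<Longrightarrow> lmap a (add b c) = add (lmap a b) (lmap a c)"
  by (simp add: lam_def brace_distrib add_assoc)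

lemma lmap_mul:
  assumes "a \<in> A" "b \<in> A" "u \<in> A"
  shows "lmap a (lmap b u) = lmap (mul a b) u"
proof -
  have "add (add (mul a b) (ainv a)) (mul a (ainv b)) = a"
    using brace_distrib[of a b "ainv b"] assms by simp
  then have "add (mul a b) (lmap a (ainv b)) = a"
    using assms by (simp add: lam_def add_assoc)
  then have lmap_ainv: "lmap a (ainv b) = add (ainv (mul a b)) a"
    using assms ainv_add_cancel(1)[of "mul a b" "lmap a (ainv b)"] by simp
  have "lmap a (lmap b u) = lmap a (add (ainv b) (mul b u))"
    by (simp add: lam_def)
  also have "\<dots> = add (lmap a (ainv b)) (lmap a (mul b u))"
    using assms by (simp add: lmap_add)
  also have "\<dots> = add (ainv (mul a b)) (mul a (mul b u))"
    using assms by (simp only: lmap_ainv) (simp add: lam_def add_assoc)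
  also have "\<dots> = lmap (mul a b) u"
    using assms by (simp add: lam_def mul_assoc)
  finally show ?thesis .
qed

lemma add_eq_mul_lmap:
  assumes "a \<in> A" "u \<in> A"
  shows "add a u = mul a (lmap (minv a) u)"
proof -
  have "mul a (lmap (minv a) u) = add a (lmap a (lmap (minv a) u))"
    using assms by (simp add: mul_eq_add_lmap)
  also have "\<dots> = add a u"
    using assms by (simp add: lmap_mul)
  finally show ?thesis by simp
qed

lemma ainv_eq_lmap: "a \<in> A \<Longrightarrow> ainv a = lmap a (minv a)"
  by (simp add: lam_def)

lemma lmap_fixed_if_add_eq_mul: "a \<in> A \<Longrightarrow> u \<in> A \<Longrightarrow> add a u = mul a u \<Longrightarrow> lmap a u = u"
  by (metis ainv_add_cancel(1) lmap_closed mul_eq_add_lmap)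

lemma sb_ideal_iff_normal:
  "ideal J \<longleftrightarrow> J \<lhd> Mul \<and> J \<lhd> Add \<and> (\<forall>a\<in>A. lmap a ` J \<subseteq> J)"
proof -
  have cosets: "J #>\<^bsub>Add\<^esub> a = (\<lambda>i. add i a) ` J" "a <#\<^bsub>Add\<^esub> J = (\<lambda>i. add a i) ` J" for a
    by (auto simp: r_coset_def l_coset_def)
  have "J \<lhd> Add" if "J \<lhd> Mul" and lmap_in: "\<forall>a\<in>A. lmap a ` J \<subseteq> J"
    and add_cosets: "\<forall>a\<in>A. (\<lambda>i. add i a) ` J = (\<lambda>i. add a i) ` J"
  proof (rule Add.normalI)
    interpret J: subgroup J Mul using normal_imp_subgroup[OF that(1)] .
    have J_sub: "x \<in> J \<Longrightarrow> x \<in> A" for x using J.subset by auto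
    show "subgroup J Add"
    proof (rule Add.subgroupI)
      show "J \<subseteq> carrier Add" "J \<noteq> {}" using J.subset J.one_closed by auto
      show "inv\<^bsub>Add\<^esub> x \<in> J" if "x \<in> J" for x
        using ainv_eq_lmap[of x] lmap_in J.m_inv_closed[OF that] J_sub[OF that]
        by (auto simp: add_inv_def)
      show "x \<otimes>\<^bsub>Add\<^esub> y \<in> J" if "x \<in> J" "y \<in> J" for x y
        using add_eq_mul_lmap[of x y] lmap_in J.m_closed[OF that(1)] J.m_inv_closed[OF that(1)] that J_sub
        by auto
    qed
    show "\<forall>x\<in>carrier Add. J #>\<^bsub>Add\<^esub> x = x <#\<^bsub>Add\<^esub> J"
      using add_cosets by (simp add: cosets)
  qed
  then show ?thesis
    unfolding sb_ideal_def using normal.coset_eq[of J Add] by (auto simp: cosets)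
qed

lemma ideal_subgroup_Mul: "ideal J \<Longrightarrow> subgroup J Mul"
  unfolding sb_ideal_def by (simp add: normal_imp_subgroup)

lemma ideal_subset: "ideal J \<Longrightarrow> J \<subseteq> A"
  using subgroup.subset[OF ideal_subgroup_Mul] by simp

lemma ideal_one: "ideal J \<Longrightarrow> e \<in> J"
  using subgroup.one_closed[OF ideal_subgroup_Mul] by simp

lemma ideal_mul_closed: "ideal J \<Longrightarrow> x \<in> J \<Longrightarrow> y \<in> J \<Longrightarrow> mul x y \<in> J"
  using subgroup.m_closed[OF ideal_subgroup_Mul] by simp

lemma ideal_lmap_closed: "ideal J \<Longrightarrow> a \<in> A \<Longrightarrow> x \<in> J \<Longrightarrow> lmap a x \<in> J"
  unfolding sb_ideal_def by blast

lemma ideal_trivial: "ideal {e}"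
  using Mul.one_is_normal Add.one_is_normal by (simp add: sb_ideal_iff_normal)

lemma ideal_Union_directed:
  assumes "\<J> \<noteq> {}" and ideal: "\<And>J. J \<in> \<J> \<Longrightarrow> ideal J"
    and directed: "\<And>J J'. J \<in> \<J> \<Longrightarrow> J' \<in> \<J> \<Longrightarrow> \<exists>J''\<in>\<J>. J \<union> J' \<subseteq> J''"
  shows "ideal (\<Union>\<J>)"
  unfolding sb_ideal_iff_normal
proof (intro conjI ballI)
  show "\<Union>\<J> \<lhd> Mul"
    using Mul.normal_Union_directed[OF assms(1) _ directed] ideal by (simp add: sb_ideal_iff_normal)
  show "\<Union>\<J> \<lhd> Add"
    using Add.normal_Union_directed[OF assms(1) _ directed] ideal by (simp add: sb_ideal_iff_normal)
  show "lmap a ` \<Union>\<J> \<subseteq> \<Union>\<J>" if "a \<in> A" for a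
    using ideal_lmap_closed[OF ideal that] by blast
qed

lemma set_mult_Mul_eq_Add:
  assumes "ideal J" "ideal K"
  shows "J <#>\<^bsub>Mul\<^esub> K = J <#>\<^bsub>Add\<^esub> K"
proof -
  have "mul x y = add x (lmap x y)" "lmap x y \<in> K"
    and "add x y = mul x (lmap (minv x) y)" "lmap (minv x) y \<in> K"
    if "x \<in> J" "y \<in> K" for x y
    using that assms ideal_subset[of J] ideal_subset[of K] ideal_lmap_closed[of K]
    by (auto simp: mul_eq_add_lmap add_eq_mul_lmap subset_iff)
  then show ?thesis
    unfolding set_eq_iff mem_set_mult_grp by metis
qed

lemma ideal_set_mult:
  assumes "ideal J" "ideal K"
  shows "ideal (J <#>\<^bsub>Mul\<^esub> K)"
  unfolding sb_ideal_iff_normal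
proof (intro conjI ballI)
  show "J <#>\<^bsub>Mul\<^esub> K \<lhd> Mul"
    using Mul.normal_subgroup_set_mult_closed assms by (simp add: sb_ideal_iff_normal)
  show "J <#>\<^bsub>Mul\<^esub> K \<lhd> Add"
    using Add.normal_subgroup_set_mult_closed assms by (simp add: sb_ideal_iff_normal set_mult_Mul_eq_Add)
  show "lmap a ` (J <#>\<^bsub>Mul\<^esub> K) \<subseteq> J <#>\<^bsub>Mul\<^esub> K" if "a \<in> A" for a
  proof -
    have "lmap a (add x y) = add (lmap a x) (lmap a y)" "lmap a x \<in> J" "lmap a y \<in> K"
      if "x \<in> J" "y \<in> K" for x y
      using that \<open>a \<in> A\<close> assms ideal_subset[of J] ideal_subset[of K] ideal_lmap_closed
      by (auto simp: lmap_add subset_iff)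
    then show ?thesis
      unfolding set_mult_Mul_eq_Add[OF assms] image_subset_iff Ball_def mem_set_mult_grp by blast
  qed
qed

definition commuting :: "'a set \<Rightarrow> 'a set \<Rightarrow> bool" where
  "commuting I J \<longleftrightarrow> (\<forall>i\<in>I. \<forall>j\<in>J. add i j = add j i \<and> mul i j = mul j i \<and> add i j = mul i j)"

lemma centralizes_imp_commuting:
  assumes "ideal I" "ideal J" "centralizes A add mul e I J"
  shows "commuting I J"
  unfolding commuting_def
proof (intro ballI)
  fix i j assume i: "i \<in> I" and j: "j \<in> J"
  obtain \<phi> where hom: "\<forall>i\<in>I. \<forall>j\<in>J. \<forall>i'\<in>I. \<forall>j'\<in>J.
      \<phi> (add i i', add j j') = add (\<phi> (i, j)) (\<phi> (i', j')) \<and>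
      \<phi> (mul i i', mul j j') = mul (\<phi> (i, j)) (\<phi> (i', j'))"
    and left: "\<forall>i\<in>I. \<phi> (i, e) = i" and right: "\<forall>j\<in>J. \<phi> (e, j) = j"
    using assms(3) unfolding centralizes_def by blast
  have "i \<in> A" "j \<in> A" "e \<in> I" "e \<in> J"
    using i j assms(1,2) ideal_subset ideal_one by auto
  then have "\<phi> (i, j) = add i j" "\<phi> (i, j) = add j i" "\<phi> (i, j) = mul i j" "\<phi> (i, j) = mul j i"
    using hom[rule_format, of i e e j] hom[rule_format, of e j i e] left right i j by auto
  then show "add i j = add j i \<and> mul i j = mul j i \<and> add i j = mul i j"
    by simp
qed

lemma commuting_imp_centralizes:
  assumes "ideal I" "ideal J" "commuting I J"
  shows "centralizes A add mul e I J"
proof -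
  have sub: "i \<in> I \<Longrightarrow> i \<in> A" "j \<in> J \<Longrightarrow> j \<in> A" for i j
    using assms(1,2) ideal_subset by auto
  have comm: "add i j = add j i" "mul i j = mul j i" "add i j = mul i j" if "i \<in> I" "j \<in> J" for i j
    using assms(3) that unfolding commuting_def by blast+
  have "add (add i i') (add j j') = add (add i j) (add i' j')"
    and "add (mul i i') (mul j j') = mul (add i j) (add i' j')"
    if ij: "i \<in> I" "j \<in> J" "i' \<in> I" "j' \<in> J" for i j i' j'
  proof -
    have "add (add i i') (add j j') = add i (add (add i' j) j')"
      using ij sub by (simp add: add_assoc)
    also have "\<dots> = add (add i j) (add i' j')"
      using ij sub by (simp add: comm(1)[of i' j] add_assoc)
    finally show "add (add i i') (add j j') = add (add i j) (add i' j')" .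
    have "add (mul i i') (mul j j') = mul (mul i i') (mul j j')"
      using ij comm(3) ideal_mul_closed assms(1,2) by blast
    also have "\<dots> = mul i (mul (mul i' j) j')"
      using ij sub by (simp add: mul_assoc)
    also have "\<dots> = mul (mul i j) (mul i' j')"
      using ij sub by (simp add: comm(2)[of i' j] mul_assoc)
    also have "\<dots> = mul (add i j) (add i' j')"
      using ij by (simp add: comm(3))
    finally show "add (mul i i') (mul j j') = mul (add i j) (add i' j')" .
  qed
  then show ?thesis
    unfolding centralizes_def using sub
    by (intro exI[of _ "\<lambda>(i, j). add i j"]) auto
qed

lemma commuting_set_mult:
  assumes "I \<subseteq> A" "ideal J" "ideal K" "commuting I J" "commuting I K"
  shows "commuting I (J <#>\<^bsub>Mul\<^esub> K)"
  unfolding commuting_def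
proof (intro ballI)
  fix i z assume i: "i \<in> I" and "z \<in> J <#>\<^bsub>Mul\<^esub> K"
  then obtain x y where xy: "x \<in> J" "y \<in> K" "z = mul x y"
    unfolding mem_set_mult_grp by blast
  define y' where "y' = lmap x y"
  have A: "i \<in> A" "x \<in> A" "y \<in> A" "y' \<in> A"
    using i xy assms(1-3) ideal_subset[of J] ideal_subset[of K] by (auto simp: y'_def subset_iff)
  have y': "y' \<in> K" "z = add x y'"
    using xy ideal_lmap_closed[OF assms(3)] A mul_eq_add_lmap unfolding y'_def by auto
  have cx: "add i x = add x i" "mul i x = mul x i" "add i x = mul i x"
    using assms(4) i xy unfolding commuting_def by blast+
  have cy: "mul i y = mul y i" "add i y' = add y' i" "add i y' = mul i y'"
    using assms(5) i xy y' unfolding commuting_def by blast+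
  have "add i z = add x (add i y')"
    using A y' by (simp flip: add_assoc cx(1))
  also have "\<dots> = add z i"
    using A y' by (simp add: add_assoc cy(2))
  finally have add_comm: "add i z = add z i" .
  have "mul i z = mul x (mul i y)"
    using A xy by (simp flip: mul_assoc cx(2))
  also have "\<dots> = mul z i"
    using A xy by (simp add: mul_assoc cy(1))
  finally have mul_comm: "mul i z = mul z i" .
  have "add i z = mul i z"
  proof -
    text \<open>Both \<open>x\<close> and \<open>y'\<close> are fixed by \<open>\<lambda>\<^sub>i\<close>, hence so is \<open>z = x * y'\<close>.\<close>
    have "lmap i z = add (lmap i x) (lmap i y')"
      using A y' by (simp add: lmap_add)
    also have "\<dots> = z"
      using A y' cx(3) cy(3) by (simp add: lmap_fixed_if_add_eq_mul)
    finally show ?thesis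
      using A y' mul_eq_add_lmap[of i z] by simp
  qed
  with add_comm mul_comm show "add i z = add z i \<and> mul i z = mul z i \<and> add i z = mul i z"
    by blast
qed

definition centralizer :: "'a set \<Rightarrow> 'a set" where
  "centralizer I = \<Union>{J. ideal J \<and> commuting I J}"

lemma ideal_centralizer:
  assumes "I \<subseteq> A"
  shows "ideal (centralizer I)"
  unfolding centralizer_def
proof (rule ideal_Union_directed)
  have "commuting I {e}"
    using assms by (auto simp: commuting_def)
  then show "{J. ideal J \<and> commuting I J} \<noteq> {}"
    using ideal_trivial by blast
  fix J K assume J: "J \<in> {J. ideal J \<and> commuting I J}" and K: "K \<in> {J. ideal J \<and> commuting I J}"
  then have "J \<union> K \<subseteq> J <#>\<^bsub>Mul\<^esub> K"
    using ideal_subset ideal_one by (force simp: mem_set_mult_grp)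
  then show "\<exists>L\<in>{J. ideal J \<and> commuting I J}. J \<union> K \<subseteq> L"
    using J K ideal_set_mult commuting_set_mult[OF assms] by blast
qed auto

lemma commuting_centralizer: "commuting I (centralizer I)"
  unfolding centralizer_def commuting_def by blast

end

theorem mainTheorem13:
  assumes "skew_brace A add mul e"
    and "sb_ideal A add mul e I"
  shows "\<exists>C. sb_ideal A add mul e C \<and> centralizes A add mul e I C \<and>
              (\<forall>J. sb_ideal A add mul e J \<and> centralizes A add mul e I J \<longrightarrow> J \<subseteq> C)"
proof -
  interpret left_skew_brace A add mul e
    using assms(1) by (rule left_skew_brace.intro)
  have "I \<subseteq> A"
    using assms(2) by (rule ideal_subset)
  then have "sb_ideal A add mul e (centralizer I)"
    by (rule ideal_centralizer)
  moreover have "centralizes A add mul e I (centralizer I)"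
    using assms(2) \<open>sb_ideal A add mul e (centralizer I)\<close> commuting_centralizer
    by (rule commuting_imp_centralizes)
  moreover have "J \<subseteq> centralizer I"
    if "sb_ideal A add mul e J" "centralizes A add mul e I J" for J
    using that centralizes_imp_commuting[OF assms(2)] unfolding centralizer_def by blast
  ultimately show ?thesis
    by blast
qed

end
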